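(* Consider the multiset combinatorial auction model described in the context, where the auction's allocation is a solution of the winner determination problem (WDP) on the inferred values. (i) In an auction using only demand queries, adding demand queries can reduce efficiency: a single additional demand query can cause an efficiency drop arbitrarily close to $100\%$, i.e., for every $\delta>0$ there exist an instance, a finite set of demand-query price vectors with truthful responses for which the WDP allocation has efficiency $1$, and one additional price vector such that, after adding the (truthful) responses to that demand query, the WDP allocation has efficiency less than $\delta$. (ii) By comparison, in an auction using only value queries and assuming truthful bidding, adding additional value queries can never reduce the efficiency of the WDP allocation.
   Context: Multiset combinatorial auction: bidders $N=\{1,\dots,n\}$, items $M=\{1,\dots,m\}$ with capacities $c\in\mathbb{N}^m$. Bundles are $x\in\mathcal{X}=\{0,\dots,c_1\}\times\cdots\times\{0,\dots,c_m\}$. Each bidder $i$ has a value function $v_i:\mathcal{X}\to\mathbb{R}_{\ge0}$. Feasible allocations: $\mathcal{F}=\{a\in\mathcal{X}^n:\sum_i a_{ij}\le c_j\ \forall j\}$. Social welfare $V(a)=\sum_i v_i(a_i)$; efficiency of $a$ is $V(a)/\max_{a'\in\mathcal{F}}V(a')$. A demand query at prices $p\in\mathbb{R}^m_{\ge0}$ is answered truthfully by bidder $i$ with some $x_i^*(p)\in\arg\max_{x\in\mathcal{X}}\{v_i(x)-\langle p,x\rangle\}$; a value query for $x$ is answered with $v_i(x)$. With reports $R_i$ consisting of demand responses $R_i^{DQ}$ (pairs $(x,p)$) and value responses $R_i^{VQ}$ (pairs $(x,v_i(x))$), the inferred value is $\tilde v_i(x;R_i)=v_i(x)$ if $x$ appears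 in $R_i^{VQ}$ and otherwise $\max(\{\langle x,p\rangle:(x,p)\in R_i^{DQ}\}\cup\{0\})$. The WDP allocation is $a^*(R)\in\arg\max_{a\in\mathcal{F}}\sum_i\tilde v_i(a_i;R_i)$.
   Formalization: In (ii) the WDP maximises only over allocations giving each bidder a bundle with a reported value or the empty bundle, each $v_i$ is zero at the empty bundle, and both parts concern every WDP allocation. Apart from conventions, each condition added here is assumed in the paper as well or is needed for the statement above to hold. *)

theory Defs
  imports Complex_Main
begin

text \<open>Items are 0..<m, bidders are 0..<n.
  Price vectors are functions nat \<Rightarrow> real (only coordinates j < m matter).\<close>

definition bundles :: "nat \<Rightarrow> (nat \<Rightarrow> nat) \<Rightarrow> (nat \<Rightarrow> nat) set" where
  "bundles m c = {x. (\<forall>j<m. x j \<le> c j) \<and> (\<forall>j\<ge>m. x j = 0)}"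

definition empty_bundle :: "nat \<Rightarrow> nat" where
  "empty_bundle = (\<lambda>_. 0)"

definition feasible :: "nat \<Rightarrow> nat \<Rightarrow> (nat \<Rightarrow> nat) \<Rightarrow> (nat \<Rightarrow> nat \<Rightarrow> nat) set" where
  "feasible n m c = {a. (\<forall>i<n. a i \<in> bundles m c) \<and> (\<forall>i\<ge>n. a i = empty_bundle)
                        \<and> (\<forall>j<m. (\<Sum>i<n. a i j) \<le> c j)}"

definition welfare :: "nat \<Rightarrow> (nat \<Rightarrow> (nat \<Rightarrow> nat) \<Rightarrow> real) \<Rightarrow> (nat \<Rightarrow> nat \<Rightarrow> nat) \<Rightarrow> real" where
  "welfare n v a = (\<Sum>i<n. v i (a i))"

definition opt_welfare :: "nat \<Rightarrow> nat \<Rightarrow> (nat \<Rightarrow> nat) \<Rightarrow> (nat \<Rightarrow> (nat \<Rightarrow> nat) \<Rightarrow> real) \<Rightarrow> real" where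
  "opt_welfare n m c v = Max (welfare n v ` feasible n m c)"

definition efficiency ::
  "nat \<Rightarrow> nat \<Rightarrow> (nat \<Rightarrow> nat) \<Rightarrow> (nat \<Rightarrow> (nat \<Rightarrow> nat) \<Rightarrow> real) \<Rightarrow> (nat \<Rightarrow> nat \<Rightarrow> nat) \<Rightarrow> real" where
  "efficiency n m c v a = welfare n v a / opt_welfare n m c v"

definition valid_values :: "nat \<Rightarrow> nat \<Rightarrow> (nat \<Rightarrow> nat) \<Rightarrow> (nat \<Rightarrow> (nat \<Rightarrow> nat) \<Rightarrow> real) \<Rightarrow> bool" where
  "valid_values n m c v = (\<forall>i<n. \<forall>x\<in>bundles m c. v i x \<ge> 0)"

definition price_vec :: "nat \<Rightarrow> (nat \<Rightarrow> real) \<Rightarrow> bool" where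
  "price_vec m p = (\<forall>j<m. p j \<ge> 0)"

definition ip :: "nat \<Rightarrow> (nat \<Rightarrow> real) \<Rightarrow> (nat \<Rightarrow> nat) \<Rightarrow> real" where
  "ip m p x = (\<Sum>j<m. p j * real (x j))"

definition demand :: "nat \<Rightarrow> (nat \<Rightarrow> nat) \<Rightarrow> ((nat \<Rightarrow> nat) \<Rightarrow> real) \<Rightarrow> (nat \<Rightarrow> real) \<Rightarrow> (nat \<Rightarrow> nat) set" where
  "demand m c vi p = {x \<in> bundles m c. \<forall>y\<in>bundles m c. vi y - ip m p y \<le> vi x - ip m p x}"

text \<open>Inferred value from demand reports RD (pairs (x,p)) and value reports RV (pairs (x,v(x))).\<close>
definition inferred ::
  "nat \<Rightarrow> ((nat \<Rightarrow> nat) \<times> (nat \<Rightarrow> real)) set \<Rightarrow> ((nat \<Rightarrow> nat) \<times> real) set \<Rightarrow> (nat \<Rightarrow> nat) \<Rightarrow> real" where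
  "inferred m RD RV x =
     (if \<exists>r. (x, r) \<in> RV then (SOME r. (x, r) \<in> RV)
      else Max ({ip m p x | p. (x, p) \<in> RD} \<union> {0}))"

definition inferred_welfare ::
  "nat \<Rightarrow> nat \<Rightarrow> (nat \<Rightarrow> ((nat \<Rightarrow> nat) \<times> (nat \<Rightarrow> real)) set) \<Rightarrow> (nat \<Rightarrow> ((nat \<Rightarrow> nat) \<times> real) set)
     \<Rightarrow> (nat \<Rightarrow> nat \<Rightarrow> nat) \<Rightarrow> real" where
  "inferred_welfare n m RD RV a = (\<Sum>i<n. inferred m (RD i) (RV i) (a i))"

definition is_WDP ::
  "nat \<Rightarrow> nat \<Rightarrow> (nat \<Rightarrow> nat) \<Rightarrow> (nat \<Rightarrow> ((nat \<Rightarrow> nat) \<times> (nat \<Rightarrow> real)) set)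
     \<Rightarrow> (nat \<Rightarrow> ((nat \<Rightarrow> nat) \<times> real) set) \<Rightarrow> (nat \<Rightarrow> nat \<Rightarrow> nat) \<Rightarrow> bool" where
  "is_WDP n m c RD RV a = (a \<in> feasible n m c \<and>
     (\<forall>b\<in>feasible n m c. inferred_welfare n m RD RV b \<le> inferred_welfare n m RD RV a))"

definition vq_allowed ::
  "nat \<Rightarrow> nat \<Rightarrow> (nat \<Rightarrow> nat) \<Rightarrow> (nat \<Rightarrow> ((nat \<Rightarrow> nat) \<times> real) set) \<Rightarrow> (nat \<Rightarrow> nat \<Rightarrow> nat) set" where
  "vq_allowed n m c RV = {a \<in> feasible n m c. \<forall>i<n. a i = empty_bundle \<or> (\<exists>r. (a i, r) \<in> RV i)}"

definition is_WDP_VQ ::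
  "nat \<Rightarrow> nat \<Rightarrow> (nat \<Rightarrow> nat) \<Rightarrow> (nat \<Rightarrow> ((nat \<Rightarrow> nat) \<times> real) set) \<Rightarrow> (nat \<Rightarrow> nat \<Rightarrow> nat) \<Rightarrow> bool" where
  "is_WDP_VQ n m c RV a = (a \<in> vq_allowed n m c RV \<and>
     (\<forall>b\<in>vq_allowed n m c RV. inferred_welfare n m (\<lambda>_. {}) RV b \<le> inferred_welfare n m (\<lambda>_. {}) RV a))"

definition truthful_VQ ::
  "nat \<Rightarrow> nat \<Rightarrow> (nat \<Rightarrow> nat) \<Rightarrow> (nat \<Rightarrow> (nat \<Rightarrow> nat) \<Rightarrow> real) \<Rightarrow> (nat \<Rightarrow> ((nat \<Rightarrow> nat) \<times> real) set) \<Rightarrow> bool" where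
  "truthful_VQ n m c v RV = (\<forall>i<n. finite (RV i) \<and> (\<forall>(x, r)\<in>RV i. x \<in> bundles m c \<and> r = v i x))"

end

theory Submission
  imports Defs
begin

text \<open>(i) Two bidders and two items A, B of capacity one. Bidder 0 values every bundle
  containing A at 1, bidder 1 values the bundle AB at \<epsilon> < 1. At prices (\<epsilon>/2, 2) bidder 0
  demands A and bidder 1 nothing, so the WDP gives A to bidder 0, which is optimal. At the
  uniform price \<epsilon>/3 bidder 0 still demands A while bidder 1 demands AB, which certifies a value
  of at least 2\<epsilon>/3 for AB; this beats the best certified value \<epsilon>/2 of A for bidder 0, so the
  WDP now gives AB to bidder 1 and the welfare drops from 1 to \<epsilon>.

  (ii) Truthful value reports make the inferred value equal to the true value on every
  allocation the value-query WDP may choose, and more reports only enlarge that set of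
  allocations. Hence the old WDP allocation stays admissible and the new one has at least
  its true welfare.\<close>

lemma finite_bundles: "finite (bundles m c)"
proof -
  let ?N = "\<Sum>j<m. c j"
  have "bundles m c \<subseteq> {x. \<forall>j. (j \<in> {..<m} \<longrightarrow> x j \<in> {..?N}) \<and> (j \<notin> {..<m} \<longrightarrow> x j = 0)}"
    by (auto simp: bundles_def intro: order_trans member_le_sum)
  then show ?thesis
    by (rule finite_subset) (rule finite_set_of_finite_funs, auto)
qed

lemma finite_feasible: "finite (feasible n m c)"
proof -
  have "feasible n m c \<subseteq>
      {a. \<forall>i. (i \<in> {..<n} \<longrightarrow> a i \<in> bundles m c) \<and> (i \<notin> {..<n} \<longrightarrow> a i = empty_bundle)}"
    by (auto simp: feasible_def)
  then show ?thesis
    by (rule finite_subset) (rule finite_set_of_finite_funs, auto simp: finite_bundles)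
qed

lemma empty_allocation_feasible: "(\<lambda>_. empty_bundle) \<in> feasible n m c"
  by (auto simp: feasible_def bundles_def empty_bundle_def)

lemma welfare_le_opt_welfare: "a \<in> feasible n m c \<Longrightarrow> welfare n v a \<le> opt_welfare n m c v"
  unfolding opt_welfare_def by (rule Max_ge) (auto simp: finite_feasible)

lemma opt_welfare_nonneg:
  assumes "\<forall>i<n. v i empty_bundle = 0"
  shows "0 \<le> opt_welfare n m c v"
  using welfare_le_opt_welfare[OF empty_allocation_feasible, where n = n and m = m and c = c and v = v]
    assms
  by (simp add: welfare_def)

lemma efficiency_mono:
  assumes "\<forall>i<n. v i empty_bundle = 0" and "welfare n v a \<le> welfare n v b"
  shows "efficiency n m c v a \<le> efficiency n m c v b"
  unfolding efficiency_def
  using assms(2) opt_welfare_nonneg[where n = n and m = m and c = c and v = v, OF assms(1)]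
  by (rule divide_right_mono)

lemma inferred_value_reports_eq_value:
  assumes "truthful_VQ n m c v RV" "i < n" "v i empty_bundle = 0"
    and "x = empty_bundle \<or> (\<exists>r. (x, r) \<in> RV i)"
  shows "inferred m {} (RV i) x = v i x"
proof (cases "\<exists>r. (x, r) \<in> RV i")
  case True
  then have "(x, SOME r. (x, r) \<in> RV i) \<in> RV i" by (rule someI_ex)
  with assms(1,2) have "(SOME r. (x, r) \<in> RV i) = v i x" by (auto simp: truthful_VQ_def)
  with True show ?thesis by (simp add: inferred_def)
next
  case False
  with assms(3,4) show ?thesis by (simp add: inferred_def)
qed

lemma inferred_welfare_vq_allowed_eq_welfare:
  assumes "truthful_VQ n m c v RV" "\<forall>i<n. v i empty_bundle = 0" "a \<in> vq_allowed n m c RV"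
  shows "inferred_welfare n m (\<lambda>_. {}) RV a = welfare n v a"
  unfolding inferred_welfare_def welfare_def
  using assms by (intro sum.cong) (auto simp: vq_allowed_def intro!: inferred_value_reports_eq_value)

lemma vq_allowed_mono:
  "\<forall>i<n. RV i \<subseteq> RV' i \<Longrightarrow> vq_allowed n m c RV \<subseteq> vq_allowed n m c RV'"
  unfolding vq_allowed_def by blast

lemma efficiency_mono_value_queries:
  assumes empty: "\<forall>i<n. v i empty_bundle = 0"
    and truthful': "truthful_VQ n m c v RV'" and more: "\<forall>i<n. RV i \<subseteq> RV' i"
    and wdp: "is_WDP_VQ n m c RV a" and wdp': "is_WDP_VQ n m c RV' a'"
  shows "efficiency n m c v a \<le> efficiency n m c v a'"
proof (rule efficiency_mono[where n = n and v = v, OF empty])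
  have a: "a \<in> vq_allowed n m c RV'"
    using wdp vq_allowed_mono[OF more] by (auto simp: is_WDP_VQ_def)
  have a': "a' \<in> vq_allowed n m c RV'"
    using wdp' by (simp add: is_WDP_VQ_def)
  have "welfare n v a = inferred_welfare n m (\<lambda>_. {}) RV' a"
    using inferred_welfare_vq_allowed_eq_welfare[OF truthful' empty a] by simp
  also have "\<dots> \<le> inferred_welfare n m (\<lambda>_. {}) RV' a'"
    using wdp' a by (simp add: is_WDP_VQ_def)
  also have "\<dots> = welfare n v a'"
    using inferred_welfare_vq_allowed_eq_welfare[OF truthful' empty a'] .
  finally show "welfare n v a \<le> welfare n v a'" .
qed

lemma inferred_demand_reports:
  "inferred m RD {} x = Max (insert 0 ((\<lambda>p. ip m p x) ` {p. (x, p) \<in> RD}))"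
  unfolding inferred_def by (simp add: image_Collect)

lemma inferred_no_reports [simp]: "inferred m {} {} x = 0"
  by (simp add: inferred_demand_reports)

lemma inferred_insert_demand_report [simp]:
  assumes "finite RD"
  shows "inferred m (insert (y, q) RD) {} x =
    (if x = y then max (ip m q x) (inferred m RD {} x) else inferred m RD {} x)"
proof -
  have "{p. (x, p) \<in> RD} \<subseteq> snd ` RD"
    by force
  then have "finite ((\<lambda>p. ip m p x) ` {p. (x, p) \<in> RD})"
    using assms by (blast intro: finite_imageI finite_subset)
  moreover have "{p. (x, p) \<in> insert (y, q) RD} =
      (if x = y then insert q {p. (x, p) \<in> RD} else {p. (x, p) \<in> RD})"
    by auto
  ultimately show ?thesis
    by (cases "x = y") (simp_all add: inferred_demand_reports insert_commute[of 0])
qed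

definition unit_capacity :: "nat \<Rightarrow> nat" where
  "unit_capacity = (\<lambda>_. 1)"

definition bundle_A :: "nat \<Rightarrow> nat" where
  "bundle_A = (\<lambda>j. if j = 0 then 1 else 0)"

definition bundle_B :: "nat \<Rightarrow> nat" where
  "bundle_B = (\<lambda>j. if j = 1 then 1 else 0)"

definition bundle_AB :: "nat \<Rightarrow> nat" where
  "bundle_AB = (\<lambda>j. if j < 2 then 1 else 0)"

lemmas two_item_bundle_defs = empty_bundle_def bundle_A_def bundle_B_def bundle_AB_def

lemma bundles_two_unit_items:
  "bundles 2 unit_capacity = {empty_bundle, bundle_A, bundle_B, bundle_AB}"
proof
  show "{empty_bundle, bundle_A, bundle_B, bundle_AB} \<subseteq> bundles 2 unit_capacity"
    by (auto simp: bundles_def unit_capacity_def two_item_bundle_defs)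
next
  show "bundles 2 unit_capacity \<subseteq> {empty_bundle, bundle_A, bundle_B, bundle_AB}"
  proof
    fix x assume "x \<in> bundles 2 unit_capacity"
    then have "x 0 \<le> 1" "x 1 \<le> 1" "\<forall>j\<ge>2. x j = 0"
      by (auto simp: bundles_def unit_capacity_def)
    then have shape: "x = (\<lambda>j. if j = 0 then x 0 else if j = 1 then x 1 else 0)"
      by (auto simp: fun_eq_iff less_2_cases_iff not_less_eq dest: spec[of _ 2])
    consider "x 0 = 0" "x 1 = 0" | "x 0 = 1" "x 1 = 0" | "x 0 = 0" "x 1 = 1" | "x 0 = 1" "x 1 = 1"
      using \<open>x 0 \<le> 1\<close> \<open>x 1 \<le> 1\<close> by linarith
    then show "x \<in> {empty_bundle, bundle_A, bundle_B, bundle_AB}"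
      by cases (subst shape; auto simp: fun_eq_iff two_item_bundle_defs)+
  qed
qed

lemma bundles_two_unit_items_distinct [simp]:
  "bundle_A \<noteq> empty_bundle" "bundle_B \<noteq> empty_bundle" "bundle_AB \<noteq> empty_bundle"
  "bundle_A \<noteq> bundle_B" "bundle_A \<noteq> bundle_AB" "bundle_B \<noteq> bundle_AB"
  unfolding two_item_bundle_defs fun_eq_iff
  by (metis zero_neq_one One_nat_def less_2_cases_iff)+

lemma ip_two_unit_items [simp]:
  "ip 2 p empty_bundle = 0" "ip 2 p bundle_A = p 0" "ip 2 p bundle_B = p 1"
  "ip 2 p bundle_AB = p 0 + p 1"
  by (simp_all add: ip_def numeral_2_eq_2 two_item_bundle_defs)

lemma demand_two_unit_items:
  "x \<in> demand 2 unit_capacity vi p \<longleftrightarrow> x \<in> {empty_bundle, bundle_A, bundle_B, bundle_AB} \<and>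
    (\<forall>y\<in>{empty_bundle, bundle_A, bundle_B, bundle_AB}. vi y - ip 2 p y \<le> vi x - ip 2 p x)"
  by (simp add: demand_def bundles_two_unit_items)

lemma feasible_two_bidders_two_unit_items:
  "a \<in> feasible 2 2 unit_capacity \<longleftrightarrow>
    a 0 \<in> bundles 2 unit_capacity \<and> a 1 \<in> bundles 2 unit_capacity \<and> (\<forall>i\<ge>2. a i = empty_bundle) \<and>
    a 0 0 + a 1 0 \<le> 1 \<and> a 0 1 + a 1 1 \<le> 1"
  unfolding feasible_def
  by (simp add: numeral_2_eq_2 All_less_Suc unit_capacity_def conj_ac)

lemma welfare_two_bidders: "welfare 2 v a = v 0 (a 0) + v 1 (a 1)"
  by (simp add: welfare_def numeral_2_eq_2)

lemma inferred_welfare_two_bidders: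
  "inferred_welfare 2 m RD RV a = inferred m (RD 0) (RV 0) (a 0) + inferred m (RD 1) (RV 1) (a 1)"
  by (simp add: inferred_welfare_def numeral_2_eq_2)

definition example_values :: "real \<Rightarrow> nat \<Rightarrow> (nat \<Rightarrow> nat) \<Rightarrow> real" where
  "example_values \<epsilon> i x =
    (if i = 0 then (if 1 \<le> x 0 then 1 else 0) else if 1 \<le> x 0 \<and> 1 \<le> x 1 then \<epsilon> else 0)"

definition initial_prices :: "real \<Rightarrow> nat \<Rightarrow> real" where
  "initial_prices \<epsilon> = (\<lambda>j. if j = 0 then \<epsilon> / 2 else 2)"

definition uniform_prices :: "real \<Rightarrow> nat \<Rightarrow> real" where
  "uniform_prices \<epsilon> = (\<lambda>_. \<epsilon> / 3)"

definition initial_demand :: "nat \<Rightarrow> nat \<Rightarrow> nat" where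
  "initial_demand i = (if i = 0 then bundle_A else empty_bundle)"

definition extra_demand :: "nat \<Rightarrow> nat \<Rightarrow> nat" where
  "extra_demand i = (if i = 0 then bundle_A else bundle_AB)"

lemma example_values_two_unit_items [simp]:
  "example_values \<epsilon> i empty_bundle = 0"
  "example_values \<epsilon> i bundle_A = (if i = 0 then 1 else 0)"
  "example_values \<epsilon> i bundle_B = 0"
  "example_values \<epsilon> i bundle_AB = (if i = 0 then 1 else \<epsilon>)"
  by (simp_all add: example_values_def two_item_bundle_defs)

lemma example_truthful_demands:
  assumes "0 < \<epsilon>" "\<epsilon> < 1"
  shows "initial_demand i \<in> demand 2 unit_capacity (example_values \<epsilon> i) (initial_prices \<epsilon>)"
    and "extra_demand i \<in> demand 2 unit_capacity (example_values \<epsilon> i) (uniform_prices \<epsilon>)"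
  using assms
  by (simp_all add: demand_two_unit_items initial_demand_def extra_demand_def
      initial_prices_def uniform_prices_def)

lemma initial_demand_feasible: "initial_demand \<in> feasible 2 2 unit_capacity"
  by (simp add: feasible_two_bidders_two_unit_items bundles_two_unit_items initial_demand_def)
    (simp add: two_item_bundle_defs)

lemma example_opt_welfare:
  assumes "0 < \<epsilon>" "\<epsilon> < 1"
  shows "opt_welfare 2 2 unit_capacity (example_values \<epsilon>) = 1"
  unfolding opt_welfare_def
proof (rule Max_eqI)
  show "finite (welfare 2 (example_values \<epsilon>) ` feasible 2 2 unit_capacity)"
    by (simp add: finite_feasible)
next
  fix w assume "w \<in> welfare 2 (example_values \<epsilon>) ` feasible 2 2 unit_capacity"
  then obtain a where "a \<in> feasible 2 2 unit_capacity" and w: "w = welfare 2 (example_values \<epsilon>) a"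
    by blast
  then have "a 0 0 + a 1 0 \<le> 1"
    by (simp add: feasible_two_bidders_two_unit_items)
  with assms show "w \<le> 1"
    unfolding w welfare_two_bidders example_values_def by auto
next
  note initial_demand_feasible
  moreover have "welfare 2 (example_values \<epsilon>) initial_demand = 1"
    by (simp add: welfare_two_bidders initial_demand_def)
  ultimately show "1 \<in> welfare 2 (example_values \<epsilon>) ` feasible 2 2 unit_capacity"
    by force
qed

lemma example_welfare_initial_reports:
  assumes "0 < \<epsilon>"
    and wdp: "is_WDP 2 2 unit_capacity (\<lambda>i. {(initial_demand i, initial_prices \<epsilon>)}) (\<lambda>_. {}) a"
  shows "welfare 2 (example_values \<epsilon>) a = 1"
proof -
  have feasible: "a \<in> feasible 2 2 unit_capacity"
    using wdp by (simp add: is_WDP_def)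
  have "inferred_welfare 2 2 (\<lambda>i. {(initial_demand i, initial_prices \<epsilon>)}) (\<lambda>_. {}) initial_demand
      \<le> inferred_welfare 2 2 (\<lambda>i. {(initial_demand i, initial_prices \<epsilon>)}) (\<lambda>_. {}) a"
    using wdp initial_demand_feasible by (simp add: is_WDP_def)
  then have "a 0 = bundle_A"
    using assms(1) by (auto simp: inferred_welfare_two_bidders initial_demand_def initial_prices_def
        split: if_splits)
  moreover from this feasible have "a 1 0 = 0"
    by (simp add: feasible_two_bidders_two_unit_items bundle_A_def)
  ultimately show ?thesis
    by (simp add: welfare_two_bidders example_values_def bundle_A_def)
qed

lemma example_welfare_extra_reports:
  assumes "0 < \<epsilon>"
    and wdp: "is_WDP 2 2 unit_capacity
      (\<lambda>i. {(extra_demand i, uniform_prices \<epsilon>), (initial_demand i, initial_prices \<epsilon>)}) (\<lambda>_. {}) a"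
  shows "welfare 2 (example_values \<epsilon>) a = \<epsilon>"
proof -
  let ?RD = "\<lambda>i. {(extra_demand i, uniform_prices \<epsilon>), (initial_demand i, initial_prices \<epsilon>)}"
  let ?b = "\<lambda>i. if i = 1 then bundle_AB else empty_bundle"
  have feasible: "a \<in> feasible 2 2 unit_capacity"
    using wdp by (simp add: is_WDP_def)
  have "?b \<in> feasible 2 2 unit_capacity"
    by (simp add: feasible_two_bidders_two_unit_items bundles_two_unit_items)
      (simp add: two_item_bundle_defs)
  then have "inferred_welfare 2 2 ?RD (\<lambda>_. {}) ?b \<le> inferred_welfare 2 2 ?RD (\<lambda>_. {}) a"
    using wdp by (simp add: is_WDP_def)
  then have "a 1 = bundle_AB"
    using assms(1) by (auto simp: inferred_welfare_two_bidders initial_demand_def extra_demand_def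
        initial_prices_def uniform_prices_def split: if_splits)
  moreover from this feasible have "a 0 0 = 0"
    by (simp add: feasible_two_bidders_two_unit_items bundle_AB_def)
  ultimately show ?thesis
    by (simp add: welfare_two_bidders example_values_def bundle_AB_def)
qed

lemma example_efficiency_initial_reports:
  assumes "0 < \<epsilon>" "\<epsilon> < 1"
    and "is_WDP 2 2 unit_capacity (\<lambda>i. {(initial_demand i, initial_prices \<epsilon>)}) (\<lambda>_. {}) a"
  shows "efficiency 2 2 unit_capacity (example_values \<epsilon>) a = 1"
  using assms by (simp add: efficiency_def example_opt_welfare example_welfare_initial_reports)

lemma example_efficiency_extra_reports:
  assumes "0 < \<epsilon>" "\<epsilon> < 1"
    and "is_WDP 2 2 unit_capacity
      (\<lambda>i. {(extra_demand i, uniform_prices \<epsilon>), (initial_demand i, initial_prices \<epsilon>)}) (\<lambda>_. {}) a"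
  shows "efficiency 2 2 unit_capacity (example_values \<epsilon>) a = \<epsilon>"
  using assms by (simp add: efficiency_def example_opt_welfare example_welfare_extra_reports)

theorem proposition3p3:
  shows
  "(\<forall>\<delta>::real. \<delta> > 0 \<longrightarrow>
      (\<exists>n m c v (P :: (nat \<Rightarrow> real) set) resp p' resp'.
         valid_values n m c v \<and> finite P \<and> (\<forall>p\<in>P. price_vec m p) \<and> price_vec m p' \<and>
         (\<forall>i<n. \<forall>p\<in>P. resp i p \<in> demand m c (v i) p) \<and>
         (\<forall>i<n. resp' i \<in> demand m c (v i) p') \<and>
         (\<forall>a. is_WDP n m c (\<lambda>i. {(resp i p, p) | p. p \<in> P}) (\<lambda>_. {}) a
                \<longrightarrow> efficiency n m c v a = 1) \<and>
         (\<forall>a. is_WDP n m c (\<lambda>i. {(resp i p, p) | p. p \<in> P} \<union> {(resp' i, p')}) (\<lambda>_. {}) a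
                \<longrightarrow> efficiency n m c v a < \<delta>)))
   \<and>
   (\<forall>n m c v RV RV' a a'.
      valid_values n m c v \<and> (\<forall>i<n. v i empty_bundle = 0) \<and>
      truthful_VQ n m c v RV \<and> truthful_VQ n m c v RV' \<and> (\<forall>i<n. RV i \<subseteq> RV' i) \<and>
      is_WDP_VQ n m c RV a \<and> is_WDP_VQ n m c RV' a'
      \<longrightarrow> efficiency n m c v a \<le> efficiency n m c v a')"
  apply (intro conjI allI impI)
  subgoal premises \<delta>_pos for \<delta>
  proof -
    define \<epsilon> where "\<epsilon> = min (\<delta> / 2) (1 / 2)"
    have \<epsilon>: "0 < \<epsilon>" "\<epsilon> < 1" "\<epsilon> < \<delta>"
      using \<delta>_pos by (auto simp: \<epsilon>_def)
    have initial_reports: "(\<lambda>i. {(initial_demand i, p) | p. p \<in> {initial_prices \<epsilon>}}) =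
        (\<lambda>i. {(initial_demand i, initial_prices \<epsilon>)})"
      by auto
    have extra_reports:
      "(\<lambda>i. {(initial_demand i, p) | p. p \<in> {initial_prices \<epsilon>}} \<union> {(extra_demand i, uniform_prices \<epsilon>)}) =
        (\<lambda>i. {(extra_demand i, uniform_prices \<epsilon>), (initial_demand i, initial_prices \<epsilon>)})"
      by auto
    show ?thesis
      apply (intro exI[where x = "2 :: nat"] exI[where x = unit_capacity]
          exI[where x = "example_values \<epsilon>"] exI[where x = "{initial_prices \<epsilon>}"]
          exI[where x = "\<lambda>i (_ :: nat \<Rightarrow> real). initial_demand i"]
          exI[where x = "uniform_prices \<epsilon>"] exI[where x = extra_demand])
      unfolding initial_reports extra_reports
      using \<epsilon> example_truthful_demands[OF \<epsilon>(1,2)] example_efficiency_initial_reports[OF \<epsilon>(1,2)]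
        example_efficiency_extra_reports[OF \<epsilon>(1,2)]
      by (simp add: valid_values_def example_values_def price_vec_def initial_prices_def
          uniform_prices_def)
  qed
  subgoal
    using efficiency_mono_value_queries by blast
  done

end
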